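(* Let $p=ef+1$ be an odd prime with $e,f$ positive integers and $f$ even, and assume $2^{p-1}\not\equiv1\pmod{p^2}$. Let $n\ge1$, $g$ an odd primitive root modulo $p^n$, $b$ an integer with $0\le b<p^{n-1}f$, and let $\alpha_n$ be a primitive $p^n$-th root of unity in an algebraic closure of $\mathbb{F}_2$. Then $S(\alpha_n^i)\neq0$ and $\widetilde S(\alpha_n^i)\neq0$ for every $i\in\mathbb{Z}_{p^n}\setminus p^{n-1}\mathbb{Z}_p$, where $p^{n-1}\mathbb{Z}_p=\{p^{n-1}k \bmod p^n: k\in\mathbb{Z}\}$.
   Context: For $1\le j\le n$ let $d_j=p^{j-1}f$, $D^{(2p^j)}_0=\{g^{td_j}\bmod 2p^j:0\le t<e\}$ and $D^{(2p^j)}_i=\{g^ix\bmod 2p^j:x\in D^{(2p^j)}_0\}$ for $0\le i<d_j$, subscripts taken modulo $d_j$. For $A\subseteq\mathbb{Z}_{2p^j}$ let $2A=\{2x\bmod 2p^j:x\in A\}$ and $p^{n-j}A=\{p^{n-j}x\bmod 2p^n:x\in A\}$. Let $\mathcal{C}_1=\bigcup_{j=1}^{n}\bigcup_{i=0}^{d_j/2-1} p^{n-j}\big(D^{(2p^j)}_{i+b}\cup 2D^{(2p^j)}_{i+b}\big)\cup\{0\}$ and $\widetilde{\mathcal{C}}_1=\bigcup_{j=1}^{n}p^{n-j}\Big(\bigcup_{i=0}^{d_j/2-1} D^{(2p^j)}_{i+b}\cup\bigcup_{i=d_j/2}^{d_j-1}2D^{(2p^j)}_{i+b}\Big)\cup\{0\}$,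 subsets of $\mathbb{Z}_{2p^n}=\{0,\dots,2p^n-1\}$, and $S(x)=\sum_{t\in\mathcal{C}_1}x^t$, $\widetilde S(x)=\sum_{t\in\widetilde{\mathcal{C}}_1}x^t$ in $\mathbb{F}_2[x]$. *)

theory Defs
  imports "HOL-Number_Theory.Number_Theory" "HOL-Computational_Algebra.Polynomial"
begin

definition dd :: "nat \<Rightarrow> nat \<Rightarrow> nat \<Rightarrow> nat" where
  "dd p f j = p ^ (j - 1) * f"

definition D0 :: "nat \<Rightarrow> nat \<Rightarrow> nat \<Rightarrow> nat \<Rightarrow> nat \<Rightarrow> nat set" where
  "D0 p e f g j = {g ^ (t * dd p f j) mod (2 * p ^ j) | t. t < e}"

definition Dc :: "nat \<Rightarrow> nat \<Rightarrow> nat \<Rightarrow> nat \<Rightarrow> nat \<Rightarrow> nat \<Rightarrow> nat set" where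
  "Dc p e f g j i = {(g ^ (i mod dd p f j) * x) mod (2 * p ^ j) | x. x \<in> D0 p e f g j}"

definition twice :: "nat \<Rightarrow> nat \<Rightarrow> nat set \<Rightarrow> nat set" where
  "twice p j A = (\<lambda>x. (2 * x) mod (2 * p ^ j)) ` A"

definition lift :: "nat \<Rightarrow> nat \<Rightarrow> nat \<Rightarrow> nat set \<Rightarrow> nat set" where
  "lift p n j A = (\<lambda>x. (p ^ (n - j) * x) mod (2 * p ^ n)) ` A"

definition C1 :: "nat \<Rightarrow> nat \<Rightarrow> nat \<Rightarrow> nat \<Rightarrow> nat \<Rightarrow> nat \<Rightarrow> nat set" where
  "C1 p e f g n b =
     (\<Union>j\<in>{1..n}. \<Union>i\<in>{0..<dd p f j div 2}.
        lift p n j (Dc p e f g j (i + b) \<union> twice p j (Dc p e f g j (i + b)))) \<union> {0}"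

definition C1t :: "nat \<Rightarrow> nat \<Rightarrow> nat \<Rightarrow> nat \<Rightarrow> nat \<Rightarrow> nat \<Rightarrow> nat set" where
  "C1t p e f g n b =
     (\<Union>j\<in>{1..n}. lift p n j
        ((\<Union>i\<in>{0..<dd p f j div 2}. Dc p e f g j (i + b)) \<union>
         (\<Union>i\<in>{dd p f j div 2..<dd p f j}. twice p j (Dc p e f g j (i + b))))) \<union> {0}"

text \<open>The polynomial \<Sum>_{t\<in>C} x^t with all coefficients 1 (image of the F_2 polynomial
  in any ring, in particular any field of characteristic 2).\<close>
definition ind_poly :: "nat set \<Rightarrow> 'a::comm_ring_1 poly" where
  "ind_poly C = (\<Sum>t\<in>C. monom 1 t)"

definition primitive_root_of_unity :: "nat \<Rightarrow> 'a::field \<Rightarrow> bool" where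
  "primitive_root_of_unity m a \<longleftrightarrow> a ^ m = 1 \<and> (\<forall>k. 0 < k \<and> k < m \<longrightarrow> a ^ k \<noteq> 1)"

end

theory Submission
  imports Defs
begin

(* Write beta = alpha ^ i. As i is not a multiple of p^(n-1), beta has order p^m with 2 <= m <= n.
   At beta the lifted doubled classes 2D contribute squares, so S(beta) = 1 + A + A^2 and
   S~(beta) = 1 + A + A'^2, where A and A' (lower_sum and upper_sum) sum beta over the lower and
   upper halves of the lifted classes D; a Ramanujan sum computation in characteristic 2 gives
   A + A' = 1. Either polynomial vanishing at beta therefore forces A^4 = A.

   To refute A^4 = A, let u = g^((p-1)e') (frob_unit) with [e e' = 1] (mod p^n). Then [u = 1] (mod p),
   and by the non-Wieferich hypothesis [u = 2^((p-1)v)] (mod p^n) for some v, so replacing beta by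
   beta^(u^s) is an even power of the Frobenius and fixes A. Since kappa = u^(p^(m-2)) is
   1 + c p^(m-1) with p not dividing c (kappa_coeff), averaging over the twists beta^(u^s kappa^t),
   t < p, against p-th roots of unity first annihilates the top level j = n and then isolates the
   sum of beta^(g^b u^(s+q)) over q < L = (p^(n-1)+1)/2 (fiber_size). Comparing s = 0 with s = 1
   yields beta^(g^b u^L) = beta^(g^b), that is, p divides e' L: impossible. *)

section \<open>Characteristic two and roots of unity\<close>

lemma of_nat_CHAR_2:
  assumes "CHAR('a::comm_ring_1) = 2"
  shows "(of_nat k :: 'a) = (if even k then 0 else 1)"
proof (cases "even k")
  case True
  then show ?thesis using assms by (simp add: of_nat_eq_0_iff_char_dvd)
next
  case False
  have two: "(2::'a) = 0" using of_nat_CHAR[where 'a = 'a] assms by simp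
  obtain l where "k = Suc (2 * l)" using False by (metis oddE Suc_eq_plus1)
  then show ?thesis using two by simp
qed

lemma power_4_power_eq:
  fixes x :: "'a::monoid_mult"
  assumes "x ^ 4 = x"
  shows "x ^ (4 ^ k) = x"
proof (induction k)
  case (Suc k)
  have "x ^ (4 ^ Suc k) = (x ^ (4 ^ k)) ^ 4" by (simp add: power_mult[symmetric] mult.commute)
  then show ?case using Suc assms by simp
qed simp

lemma power_eq_power_iff_cong:
  fixes a :: "'a::field"
  assumes order: "\<And>x. a ^ x = 1 \<longleftrightarrow> M dvd x" and "M > 0"
  shows "a ^ x = a ^ y \<longleftrightarrow> [x = y] (mod M)"
proof -
  have "a \<noteq> 0" using order[of M] \<open>M > 0\<close> by (auto simp: power_0_left)
  have *: "a ^ x = a ^ y \<longleftrightarrow> [x = y] (mod M)" if "y \<le> x" for x y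
  proof -
    have "a ^ x = a ^ y * a ^ (x - y)" using that by (simp flip: power_add)
    then have "a ^ x = a ^ y \<longleftrightarrow> a ^ (x - y) = 1" using \<open>a \<noteq> 0\<close> by auto
    then show ?thesis using that by (simp add: order cong_altdef_nat)
  qed
  show ?thesis
  proof (cases "y \<le> x")
    case False
    then have "a ^ y = a ^ x \<longleftrightarrow> [y = x] (mod M)" by (intro *) auto
    then show ?thesis by (metis cong_sym_eq)
  qed (rule *)
qed

lemma primitive_root_of_unity_power_eq_1_iff:
  fixes a :: "'a::field"
  assumes "primitive_root_of_unity M a" "M > 0"
  shows "a ^ x = 1 \<longleftrightarrow> M dvd x"
proof -
  have "a ^ x = (a ^ M) ^ (x div M) * a ^ (x mod M)"
    by (simp flip: power_mult power_add)
  then have "a ^ x = a ^ (x mod M)"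
    using assms(1) by (simp add: primitive_root_of_unity_def)
  moreover have "a ^ (x mod M) = 1 \<longleftrightarrow> x mod M = 0"
    using assms by (auto simp: primitive_root_of_unity_def)
  ultimately show ?thesis by (simp add: dvd_eq_mod_eq_0)
qed

lemma power_primitive_root_prime_power_order:
  fixes \<alpha> :: "'a::field"
  assumes p: "prime p" and \<alpha>: "primitive_root_of_unity (p ^ n) \<alpha>" and i: "i < p ^ n"
    and not_multiple: "i \<notin> {(p ^ (n - 1) * k) mod p ^ n | k. True}"
  obtains m where "2 \<le> m" "m \<le> n" "\<And>x. (\<alpha> ^ i) ^ x = 1 \<longleftrightarrow> p ^ m dvd x"
proof -
  have "i \<noteq> 0" using not_multiple by (metis (mono_tags, lifting) mem_Collect_eq mod_0 mult_0_right)
  then obtain v y where iy: "i = p ^ v * y" and y: "\<not> p dvd y"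
    using multiplicity_decompose'[of i p] p by (metis not_prime_unit)
  have v: "v + 2 \<le> n"
  proof (rule ccontr)
    assume "\<not> v + 2 \<le> n"
    then have "p ^ (n - 1) dvd i" unfolding iy by (simp add: le_imp_power_dvd)
    then obtain k where "i = p ^ (n - 1) * k" by auto
    then have "i = (p ^ (n - 1) * k) mod p ^ n" using i by simp
    then have "i \<in> {(p ^ (n - 1) * k) mod p ^ n | k. True}" by (intro CollectI exI[of _ k]) simp
    then show False using not_multiple by simp
  qed
  show ?thesis
  proof
    show "2 \<le> n - v" "n - v \<le> n" using v by auto
    have cop: "coprime (p ^ (n - v)) y" using prime_imp_coprime[OF p y] by simp
    have pn: "p ^ n = p ^ v * p ^ (n - v)" using v by (simp flip: power_add)
    fix x
    have "(\<alpha> ^ i) ^ x = 1 \<longleftrightarrow> p ^ n dvd i * x"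
      unfolding power_mult[symmetric]
      by (rule primitive_root_of_unity_power_eq_1_iff[OF \<alpha>]) (simp add: p prime_gt_0_nat)
    also have "\<dots> \<longleftrightarrow> p ^ (n - v) dvd y * x"
      using p by (simp add: pn iy mult.assoc prime_gt_0_nat)
    also have "\<dots> \<longleftrightarrow> p ^ (n - v) dvd x"
      using cop by (simp add: coprime_dvd_mult_right_iff)
    finally show "(\<alpha> ^ i) ^ x = 1 \<longleftrightarrow> p ^ (n - v) dvd x" .
  qed
qed

lemma sum_power_greaterThan_atMost_root_of_unity:
  fixes \<omega> :: "'a::field"
  assumes "\<omega> ^ P = 1"
  shows "(\<Sum>y\<in>{0<..P}. \<omega> ^ y) = (if \<omega> = 1 then of_nat P else 0)"
proof -
  have "{0<..P} = Suc ` {..<P}"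
    by (simp add: image_Suc_lessThan atLeastSucAtMost_greaterThanAtMost)
  then have "(\<Sum>y\<in>{0<..P}. \<omega> ^ y) = \<omega> * (\<Sum>y<P. \<omega> ^ y)"
    by (simp add: sum.reindex sum_distrib_left)
  then show ?thesis using assms by (simp add: sum_gp_strict)
qed

lemma sum_totatives_prime_power_root_of_unity:
  fixes \<omega> :: "'a::field"
  assumes "prime p" and \<omega>: "\<omega> ^ (p ^ Suc k) = 1"
  shows "(\<Sum>y\<in>totatives (p ^ Suc k). \<omega> ^ y) =
           (if \<omega> = 1 then of_nat (p ^ Suc k) else 0) - (if \<omega> ^ p = 1 then of_nat (p ^ k) else 0)"
proof -
  have multiples: "(\<lambda>z. p * z) ` {0<..p ^ k} \<subseteq> {0<..p ^ Suc k}"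
    using prime_gt_0_nat[OF \<open>prime p\<close>] by auto
  have "(\<Sum>y\<in>(\<lambda>z. p * z) ` {0<..p ^ k}. \<omega> ^ y) = (\<Sum>z\<in>{0<..p ^ k}. (\<omega> ^ p) ^ z)"
    using prime_gt_0_nat[OF \<open>prime p\<close>] by (subst sum.reindex) (auto simp: inj_on_def power_mult)
  also have "\<dots> = (if \<omega> ^ p = 1 then of_nat (p ^ k) else 0)"
    using \<omega> by (intro sum_power_greaterThan_atMost_root_of_unity)
      (simp add: power_mult[symmetric] mult.commute)
  finally have "(\<Sum>y\<in>(\<lambda>z. p * z) ` {0<..p ^ k}. \<omega> ^ y) = (if \<omega> ^ p = 1 then of_nat (p ^ k) else 0)" .
  moreover have "(\<Sum>y\<in>totatives (p ^ Suc k). \<omega> ^ y) =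
      (\<Sum>y\<in>{0<..p ^ Suc k}. \<omega> ^ y) - (\<Sum>y\<in>(\<lambda>z. p * z) ` {0<..p ^ k}. \<omega> ^ y)"
    unfolding totatives_prime_power_Suc[OF \<open>prime p\<close>] by (rule sum_diff[OF _ multiples]) simp
  ultimately show ?thesis
    by (simp only: sum_power_greaterThan_atMost_root_of_unity[OF \<omega>])
qed

section \<open>Primitive roots modulo prime powers\<close>

lemma cong_1_power_Suc:
  fixes a p :: nat
  assumes "k \<ge> 1" and "[a = 1] (mod p ^ k)"
  shows "[a ^ p = 1] (mod p ^ Suc k)"
proof -
  have "int p ^ k dvd int a - 1"
    using assms(2) by (metis cong_iff_dvd_diff cong_int_iff of_nat_1 of_nat_power)
  moreover have "[a = 1] (mod p)"
    using assms(2) by (rule cong_dvd_modulus_nat) (use assms(1) in \<open>simp add: dvd_power\<close>)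
  then have "[int a = 1] (mod int p)" by (metis cong_int_iff of_nat_1)
  then have "[(\<Sum>r<p. int a ^ r) = (\<Sum>r<p. 1)] (mod int p)"
    by (intro cong_sum) (metis cong_pow power_one)
  then have "int p dvd (\<Sum>r<p. int a ^ r)"
    by (simp add: cong_def dvd_eq_mod_eq_0)
  ultimately have "int p ^ k * int p dvd (int a - 1) * (\<Sum>r<p. int a ^ r)"
    by (rule mult_dvd_mono)
  then have "int p ^ Suc k dvd int a ^ p - 1"
    by (simp add: power_diff_1_eq mult.commute)
  then show ?thesis
    by (metis cong_iff_dvd_diff cong_int_iff of_nat_1 of_nat_power)
qed

lemma cong_1_power_prime_power:
  fixes a p :: nat
  assumes "k \<ge> 1" and "[a = 1] (mod p ^ k)"
  shows "[a ^ (p ^ s) = 1] (mod p ^ (k + s))"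
proof (induction s)
  case (Suc s)
  have "[(a ^ (p ^ s)) ^ p = 1] (mod p ^ Suc (k + s))"
    using assms(1) Suc by (intro cong_1_power_Suc) auto
  then show ?case by (simp add: power_mult[symmetric] mult.commute)
qed (use assms in simp)

lemma residue_primroot_prime_power_le:
  fixes p g :: nat
  assumes p: "prime p" and g: "residue_primroot (p ^ n) g" and j: "1 \<le> j" "j \<le> n"
  shows "residue_primroot (p ^ j) g"
proof -
  have "coprime (p ^ n) g" using g by (simp add: residue_primroot_def)
  then have cop: "coprime (p ^ j) g" using j by (simp add: coprime_power_left_iff)
  have tot: "totient (p ^ l) = p ^ (l - 1) * (p - 1)" if "l \<ge> 1" for l
    using p that by (simp add: totient_prime_power)
  have "[g ^ ord (p ^ j) g = 1] (mod p ^ j)" by (rule ord_works[THEN conjunct1])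
  then have "[(g ^ ord (p ^ j) g) ^ (p ^ (n - j)) = 1] (mod p ^ (j + (n - j)))"
    by (rule cong_1_power_prime_power[OF j(1)])
  then have "[g ^ (ord (p ^ j) g * p ^ (n - j)) = 1] (mod p ^ n)"
    using j by (simp add: power_mult)
  then have "ord (p ^ n) g dvd ord (p ^ j) g * p ^ (n - j)"
    by (rule ord_divides[THEN iffD1])
  then have "p ^ (n - j) * (p ^ (j - 1) * (p - 1)) dvd p ^ (n - j) * ord (p ^ j) g"
    using g j tot[of n] by (simp add: residue_primroot_def mult_ac flip: power_add)
  then have "totient (p ^ j) dvd ord (p ^ j) g"
    using p j tot[of j] by (simp add: prime_gt_0_nat)
  moreover have "[g ^ totient (p ^ j) = 1] (mod p ^ j)"
    by (intro euler_theorem) (use cop in \<open>simp add: coprime_commute\<close>)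
  then have "ord (p ^ j) g dvd totient (p ^ j)"
    by (rule ord_divides[THEN iffD1])
  ultimately show ?thesis
    using cop p by (simp add: residue_primroot_def dvd_antisym prime_gt_0_nat)
qed

lemma residue_primroot_power_cong_iff:
  fixes g :: nat
  assumes "residue_primroot N g"
  shows "[g ^ x = g ^ y] (mod N) \<longleftrightarrow> [x = y] (mod totient N)"
  using assms order_divides_expdiff[of N g x y] by (simp add: residue_primroot_def)

lemma multiplicity_prime_power_mult:
  fixes p r :: nat
  assumes "prime p" "\<not> p dvd r"
  shows "multiplicity p (p ^ a * r) = a"
proof -
  have "r \<noteq> 0" using assms(2) by (metis dvd_0_right)
  then show ?thesis
    using assms by (simp add: prime_elem_multiplicity_mult_distrib not_dvd_imp_multiplicity_0)
qed

lemma poly_ind_poly: "poly (ind_poly C) x = (\<Sum>t\<in>C. x ^ t)"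
  unfolding ind_poly_def by (simp add: poly_sum poly_monom)

lemma poly_ind_poly_insert_0_image:
  assumes "finite I" "inj_on h I" "0 \<notin> h ` I"
  shows "poly (ind_poly (insert 0 (h ` I))) x = 1 + (\<Sum>i\<in>I. x ^ h i)"
  using assms by (simp add: poly_ind_poly sum.reindex)

lemma sum_Times_singleton_Un:
  assumes "finite K" "finite K'" "a \<noteq> a'"
  shows "(\<Sum>x\<in>{a} \<times> K \<union> {a'} \<times> K'. F x) = (\<Sum>k\<in>K. F (a, k)) + (\<Sum>k\<in>K'. F (a', k))"
proof -
  have "(\<Sum>x\<in>{c} \<times> C. F x) = (\<Sum>k\<in>C. F (c, k))" for c C
  proof -
    have "{c} \<times> C = Pair c ` C" by auto
    then show ?thesis by (simp add: sum.reindex inj_on_def)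
  qed
  then show ?thesis using assms by (subst sum.union_disjoint) auto
qed

section \<open>The lifted cyclotomic classes\<close>

locale cyclotomic_classes =
  fixes p e f g n b :: nat
  assumes prime: "prime p" and odd_p: "odd p" and p_eq: "p = e * f + 1"
    and e_pos: "e > 0" and f_pos: "f > 0" and even_f: "even f"
    and non_wieferich: "\<not> [2 ^ (p - 1) = 1] (mod p ^ 2)"
    and n_pos: "n \<ge> 1" and odd_g: "odd g" and primroot: "residue_primroot (p ^ n) g"
begin

abbreviation d :: "nat \<Rightarrow> nat" where "d j \<equiv> dd p f j"

lemma p_gt_1: "p > 1"
  using prime by (rule prime_gt_1_nat)

lemma p_ge_3: "p \<ge> 3"
  using p_gt_1 odd_p by presburger

lemma d_pos: "d j > 0"
  using p_gt_1 f_pos by (simp add: dd_def)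

lemma totient_p_power: "j \<ge> 1 \<Longrightarrow> totient (p ^ j) = p ^ (j - 1) * (p - 1)"
  using prime by (simp add: totient_prime_power)

lemma d_mult_e: "j \<ge> 1 \<Longrightarrow> d j * e = totient (p ^ j)"
proof -
  assume "j \<ge> 1"
  have "d j * e = p ^ (j - 1) * (p - 1)" using p_eq by (simp add: dd_def)
  then show ?thesis using \<open>j \<ge> 1\<close> by (simp add: totient_p_power)
qed

lemma primroot_le: "1 \<le> j \<Longrightarrow> j \<le> n \<Longrightarrow> residue_primroot (p ^ j) g"
  using prime primroot by (rule residue_primroot_prime_power_le)

lemma power_g_cong_iff:
  "1 \<le> j \<Longrightarrow> j \<le> n \<Longrightarrow> [g ^ x = g ^ y] (mod p ^ j) \<longleftrightarrow> [x = y] (mod p ^ (j - 1) * (p - 1))"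
  using residue_primroot_power_cong_iff[OF primroot_le] by (simp add: totient_p_power)

lemma not_dvd_power_g: "\<not> p dvd g ^ k"
proof -
  have "coprime (p ^ n) g" using primroot by (simp add: residue_primroot_def)
  then have "coprime p (g ^ k)" using n_pos by (simp add: coprime_power_left_iff)
  then show ?thesis using p_gt_1 by (metis coprime_absorb_right coprime_commute dvd_refl nat_dvd_1_iff_1
        less_irrefl)
qed

(* The class D_(i+b) of level j is {g ^ class_exp j i t mod 2p^j | t < e}, see UN_Dc_eq. *)
definition class_exp :: "nat \<Rightarrow> nat \<Rightarrow> nat \<Rightarrow> nat" where
  "class_exp j i t = (i + b) mod d j + t * d j"

definition class_exps :: "nat \<Rightarrow> nat set \<Rightarrow> nat set" where
  "class_exps j I = (\<lambda>(i, t). class_exp j i t) ` (I \<times> {..<e})"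

lemma class_exp_inj_on: "inj_on (\<lambda>(i, t). class_exp j i t) ({..<d j} \<times> {..<e})"
proof (rule inj_onI, clarsimp)
  fix i t i' t' assume i: "i < d j" "i' < d j" and eq: "class_exp j i t = class_exp j i' t'"
  have "class_exp j i t div d j = t" "class_exp j i' t' div d j = t'"
    "class_exp j i t mod d j = (i + b) mod d j" "class_exp j i' t' mod d j = (i' + b) mod d j"
    using d_pos by (simp_all add: class_exp_def)
  then have "t = t'" and "[i + b = i' + b] (mod d j)" using eq by (auto simp: cong_def)
  then show "i = i' \<and> t = t'"
    using i by (simp add: cong_add_rcancel_nat cong_less_modulus_unique_nat)
qed

lemma class_exps_lessThan_d: "j \<ge> 1 \<Longrightarrow> class_exps j {..<d j} = {..<totient (p ^ j)}"
proof -
  assume "j \<ge> 1"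
  have "class_exp j i t < d j * e" if "t < e" for i t
  proof -
    have "class_exp j i t < d j + t * d j" using d_pos by (simp add: class_exp_def)
    also have "\<dots> \<le> d j * e" using that by (metis Suc_leI mult.commute mult_Suc mult_le_mono2)
    finally show ?thesis .
  qed
  then have "class_exps j {..<d j} \<subseteq> {..<d j * e}" by (auto simp: class_exps_def)
  moreover have "card (class_exps j {..<d j}) = card {..<d j * e}"
    unfolding class_exps_def using class_exp_inj_on by (simp add: card_image card_cartesian_product)
  ultimately show ?thesis using \<open>j \<ge> 1\<close> by (simp add: card_subset_eq d_mult_e)
qed

lemma class_exps_less_totient:
  assumes "k \<in> class_exps j I" "j \<ge> 1" "I \<subseteq> {..<d j}"
  shows "k < totient (p ^ j)"
proof -
  have "class_exps j I \<subseteq> class_exps j {..<d j}"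
    unfolding class_exps_def using assms(3) by blast
  then show ?thesis using assms(1,2) by (auto simp: class_exps_lessThan_d)
qed

lemma finite_class_exps [simp]: "finite I \<Longrightarrow> finite (class_exps j I)"
  by (simp add: class_exps_def)

lemma class_exps_halves:
  "class_exps j {..<d j div 2} \<union> class_exps j {d j div 2..<d j} = class_exps j {..<d j}"
  "class_exps j {..<d j div 2} \<inter> class_exps j {d j div 2..<d j} = {}"
proof -
  have "{..<d j div 2} \<union> {d j div 2..<d j} = {..<d j}" by auto
  then show "class_exps j {..<d j div 2} \<union> class_exps j {d j div 2..<d j} = class_exps j {..<d j}"
    unfolding class_exps_def by (metis Sigma_Un_distrib1 image_Un)
  have "class_exps j {..<d j div 2} \<inter> class_exps j {d j div 2..<d j} =
      (\<lambda>(i, t). class_exp j i t) ` ({..<d j div 2} \<times> {..<e} \<inter> {d j div 2..<d j} \<times> {..<e})"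
    unfolding class_exps_def by (rule inj_on_image_Int[symmetric, OF class_exp_inj_on]) auto
  then show "class_exps j {..<d j div 2} \<inter> class_exps j {d j div 2..<d j} = {}" by auto
qed

lemma UN_Dc_eq: "(\<Union>i\<in>I. Dc p e f g j (i + b)) = (\<lambda>k. g ^ k mod (2 * p ^ j)) ` class_exps j I"
proof -
  have "D0 p e f g j = (\<lambda>t. g ^ (t * d j) mod (2 * p ^ j)) ` {..<e}"
    by (auto simp: D0_def)
  moreover have "Dc p e f g j i' = (\<lambda>x. g ^ (i' mod d j) * x mod (2 * p ^ j)) ` D0 p e f g j" for i'
    by (auto simp: Dc_def)
  ultimately have "Dc p e f g j (i + b) = (\<lambda>t. g ^ class_exp j i t mod (2 * p ^ j)) ` {..<e}" for i
    by (simp add: image_image mod_mult_right_eq power_add class_exp_def)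
  then show ?thesis by (auto simp: class_exps_def)
qed

(* The weight w = 1 encodes the lifted class D and w = 2 the lifted doubled class 2D. *)
definition point :: "nat \<times> nat \<times> nat \<Rightarrow> nat" where
  "point = (\<lambda>(j, w, k). p ^ (n - j) * (w * g ^ k mod (2 * p ^ j)))"

lemma lift_image_eq_point:
  assumes "j \<le> n"
  shows "lift p n j ((\<lambda>k. w * g ^ k mod (2 * p ^ j)) ` K) = (\<lambda>k. point (j, w, k)) ` K"
proof -
  have "p ^ (n - j) * (x mod (2 * p ^ j)) < 2 * p ^ n" for x
  proof -
    have "p ^ (n - j) * (x mod (2 * p ^ j)) < p ^ (n - j) * (2 * p ^ j)"
      using p_gt_1 by simp
    also have "\<dots> = 2 * p ^ n" using assms by (simp flip: power_add)
    finally show ?thesis .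
  qed
  then show ?thesis by (simp add: lift_def point_def image_image)
qed

lemma lift_UN_Dc:
  "j \<le> n \<Longrightarrow> lift p n j (\<Union>i\<in>I. Dc p e f g j (i + b)) = (\<lambda>k. point (j, 1, k)) ` class_exps j I"
  using lift_image_eq_point[of j 1] by (simp add: UN_Dc_eq)

lemma lift_UN_twice_Dc:
  assumes "j \<le> n"
  shows "lift p n j (\<Union>i\<in>I. twice p j (Dc p e f g j (i + b))) = (\<lambda>k. point (j, 2, k)) ` class_exps j I"
proof -
  have "(\<Union>i\<in>I. twice p j (Dc p e f g j (i + b))) = (\<lambda>k. 2 * g ^ k mod (2 * p ^ j)) ` class_exps j I"
    unfolding twice_def image_UN[symmetric] UN_Dc_eq image_image by (simp only: mod_mult_right_eq)
  then show ?thesis using assms by (simp only: lift_image_eq_point)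
qed

lemma C1_eq: "C1 p e f g n b = insert 0 (point ` (SIGMA j:{1..n}. {1, 2} \<times> class_exps j {..<d j div 2}))"
proof -
  have "(\<Union>i\<in>{..<d j div 2}. lift p n j (Dc p e f g j (i + b) \<union> twice p j (Dc p e f g j (i + b)))) =
      (\<lambda>k. point (j, 1, k)) ` class_exps j {..<d j div 2} \<union>
      (\<lambda>k. point (j, 2, k)) ` class_exps j {..<d j div 2}"
    if "j \<le> n" for j
    using lift_UN_Dc[OF that] lift_UN_twice_Dc[OF that]
    by (simp add: lift_def image_Un image_UN UN_Un_distrib)
  then show ?thesis unfolding C1_def by (auto simp: atLeast0LessThan)
qed

lemma C1t_eq:
  "C1t p e f g n b =
     insert 0 (point `
       (SIGMA j:{1..n}. {1} \<times> class_exps j {..<d j div 2} \<union> {2} \<times> class_exps j {d j div 2..<d j}))"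
proof -
  have "lift p n j ((\<Union>i\<in>{..<d j div 2}. Dc p e f g j (i + b)) \<union>
          (\<Union>i\<in>{d j div 2..<d j}. twice p j (Dc p e f g j (i + b)))) =
      (\<lambda>k. point (j, 1, k)) ` class_exps j {..<d j div 2} \<union>
      (\<lambda>k. point (j, 2, k)) ` class_exps j {d j div 2..<d j}"
    if "j \<le> n" for j
    using lift_UN_Dc[OF that] lift_UN_twice_Dc[OF that] by (simp add: lift_def image_Un)
  then show ?thesis unfolding C1t_def by (auto simp: atLeast0LessThan)
qed

lemma not_dvd_point_residue:
  assumes "j \<ge> 1" "w \<in> {1, 2}"
  shows "\<not> p dvd w * g ^ k mod (2 * p ^ j)"
proof
  assume "p dvd w * g ^ k mod (2 * p ^ j)"
  moreover have "p dvd 2 * p ^ j" using assms(1) by (simp add: dvd_power)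
  ultimately have "p dvd w * g ^ k" by (simp add: dvd_mod_iff)
  moreover have "\<not> p dvd w" using assms(2) p_ge_3 by (auto dest: dvd_imp_le)
  ultimately show False using prime not_dvd_power_g by (simp add: prime_dvd_mult_iff)
qed

(* The p-adic valuation of a point recovers j, its parity recovers w, and its residue modulo p^j
   recovers k. *)
lemma point_eq_pointD:
  assumes j: "1 \<le> j" "j \<le> n" "1 \<le> j'" "j' \<le> n" and w: "w \<in> {1, 2}" "w' \<in> {1, 2}"
    and k: "k < totient (p ^ j)" "k' < totient (p ^ j')"
    and "point (j, w, k) = point (j', w', k')"
  shows "j = j' \<and> w = w' \<and> k = k'"
proof -
  have eq: "p ^ (n - j) * (w * g ^ k mod (2 * p ^ j)) = p ^ (n - j') * (w' * g ^ k' mod (2 * p ^ j'))"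
    using assms(9) by (simp add: point_def)
  have "n - j = n - j'"
    using multiplicity_prime_power_mult[OF prime not_dvd_point_residue] j w eq by metis
  then have jj: "j' = j" using j by simp
  have res: "w * g ^ k mod (2 * p ^ j) = w' * g ^ k' mod (2 * p ^ j)"
    using eq p_gt_1 unfolding jj by simp
  have parity: "even (w * g ^ k mod (2 * p ^ j)) \<longleftrightarrow> even w" for w k
    using odd_g by (simp add: dvd_mod_iff[of 2 "2 * p ^ j"])
  have "even w \<longleftrightarrow> even w'"
    using parity[of w k] parity[of w' k'] by (simp only: res)
  then have ww: "w' = w" using w by auto
  have "[w * g ^ k = w * g ^ k'] (mod 2 * p ^ j)"
    using res unfolding ww cong_def .
  then have "[w * g ^ k = w * g ^ k'] (mod p ^ j)"
    by (rule cong_dvd_modulus_nat) simp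
  moreover have "coprime w (p ^ j)" using w odd_p by auto
  ultimately have "[g ^ k = g ^ k'] (mod p ^ j)"
    by (simp add: cong_mult_lcancel_nat)
  then have "[k = k'] (mod totient (p ^ j))"
    using j by (simp add: power_g_cong_iff totient_p_power)
  then show ?thesis
    using k jj ww by (simp add: cong_less_modulus_unique_nat)
qed

lemma point_inj_on: "inj_on point (SIGMA j:{1..n}. {1, 2} \<times> {..<totient (p ^ j)})"
proof (rule inj_onI)
  fix x x' assume mem: "x \<in> (SIGMA j:{1..n}. {1, 2} \<times> {..<totient (p ^ j)})"
    "x' \<in> (SIGMA j:{1..n}. {1, 2} \<times> {..<totient (p ^ j)})" and "point x = point x'"
  moreover obtain j w k j' w' k' where "x = (j, w, k)" "x' = (j', w', k')"
    by (cases x, cases x') auto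
  ultimately show "x = x'" using point_eq_pointD[of j j' w w' k k'] by auto
qed

lemma point_neq_0:
  assumes "x \<in> (SIGMA j:{1..n}. {1, 2} \<times> K j)"
  shows "point x \<noteq> 0"
proof -
  obtain j w k where x: "x = (j, w, k)" and "j \<ge> 1" "w \<in> {1, 2}"
    using assms by auto
  then have "w * g ^ k mod (2 * p ^ j) \<noteq> 0"
    using not_dvd_point_residue by (metis dvd_0_right)
  then show ?thesis using p_gt_1 by (simp add: x point_def)
qed

lemma point_cong:
  assumes "j \<le> n"
  shows "[point (j, w, k) = p ^ (n - j) * (w * g ^ k)] (mod p ^ n)"
proof -
  have "p ^ n = p ^ (n - j) * p ^ j" using assms by (simp flip: power_add)
  then show ?thesis
    by (simp add: point_def cong_def mod_mult_mult1 mod_mod_cancel[of "p ^ j" "2 * p ^ j"])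
qed

end

section \<open>Evaluation at a root of unity of order p^m\<close>

locale cyclotomic_root = cyclotomic_classes p e f g n b
  for p e f g n b :: nat +
  fixes m :: nat and \<beta> :: "'a::field"
  assumes char_2: "CHAR('a) = 2" and m_ge_2: "2 \<le> m" and m_le_n: "m \<le> n"
    and order_\<beta>: "\<And>x. \<beta> ^ x = 1 \<longleftrightarrow> p ^ m dvd x"
begin

lemma power_\<beta>_eq_iff: "\<beta> ^ x = \<beta> ^ y \<longleftrightarrow> [x = y] (mod p ^ m)"
  using power_eq_power_iff_cong[OF order_\<beta>] p_gt_1 by simp

lemma power_\<beta>_cong: "[x = y] (mod p ^ n) \<Longrightarrow> \<beta> ^ x = \<beta> ^ y"
  using power_\<beta>_eq_iff m_le_n by (metis cong_dvd_modulus_nat le_imp_power_dvd)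

lemma of_nat_odd: "odd k \<Longrightarrow> (of_nat k :: 'a) = 1"
  using of_nat_CHAR_2[OF char_2] by simp

lemma two_eq_0: "(2::'a) = 0"
  using of_nat_CHAR[where 'a = 'a] char_2 by simp

lemma sum_power_2: "(\<Sum>i\<in>I. h i) ^ 2 = (\<Sum>i\<in>I. (h i :: 'a) ^ 2)"
  by (rule freshmans_dream_sum) (simp_all add: char_2)

lemma sum_power_power_2: "(\<Sum>i\<in>I. h i) ^ (2 ^ w) = (\<Sum>i\<in>I. (h i :: 'a) ^ (2 ^ w))"
  by (rule freshmans_dream_sum') (simp_all add: char_2)

lemma add_power_2: "(x + y) ^ 2 = x ^ 2 + (y :: 'a) ^ 2"
  by (rule freshmans_dream) (simp_all add: char_2)

definition period :: "'a \<Rightarrow> nat \<Rightarrow> nat set \<Rightarrow> 'a" where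
  "period \<gamma> j I = (\<Sum>k\<in>class_exps j I. \<gamma> ^ (p ^ (n - j) * g ^ k))"

definition lower_sum :: "'a \<Rightarrow> 'a" where
  "lower_sum \<gamma> = (\<Sum>j\<in>{1..n}. period \<gamma> j {..<d j div 2})"

definition upper_sum :: "'a \<Rightarrow> 'a" where
  "upper_sum \<gamma> = (\<Sum>j\<in>{1..n}. period \<gamma> j {d j div 2..<d j})"

lemma power_\<beta>_point: "j \<le> n \<Longrightarrow> \<beta> ^ point (j, w, k) = (\<beta> ^ (p ^ (n - j) * g ^ k)) ^ w"
  using power_\<beta>_cong[OF point_cong] by (simp add: mult_ac flip: power_mult)

lemma poly_ind_poly_points:
  assumes K: "\<And>j. j \<in> {1..n} \<Longrightarrow> K j \<subseteq> {..<totient (p ^ j)}"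
    and K': "\<And>j. j \<in> {1..n} \<Longrightarrow> K' j \<subseteq> {..<totient (p ^ j)}"
  shows "poly (ind_poly (insert 0 (point ` (SIGMA j:{1..n}. {1} \<times> K j \<union> {2} \<times> K' j)))) \<beta> =
           1 + (\<Sum>j\<in>{1..n}. \<Sum>k\<in>K j. \<beta> ^ (p ^ (n - j) * g ^ k))
             + (\<Sum>j\<in>{1..n}. \<Sum>k\<in>K' j. \<beta> ^ (p ^ (n - j) * g ^ k)) ^ 2"
proof -
  let ?S = "SIGMA j:{1..n}. {1} \<times> K j \<union> {2} \<times> K' j"
  have sub: "?S \<subseteq> (SIGMA j:{1..n}. {1, 2} \<times> {..<totient (p ^ j)})"
    by (rule Sigma_mono) (use K K' in auto)
  have fin: "finite (K j)" "finite (K' j)" if "j \<in> {1..n}" for j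
    using finite_subset[OF K[OF that]] finite_subset[OF K'[OF that]] by simp_all
  have "poly (ind_poly (insert 0 (point ` ?S))) \<beta> = 1 + (\<Sum>x\<in>?S. \<beta> ^ point x)"
  proof (rule poly_ind_poly_insert_0_image)
    show "finite ?S" using fin by (intro finite_SigmaI) auto
    show "inj_on point ?S" using point_inj_on sub by (rule inj_on_subset)
    have nz: "point x \<noteq> 0" if "x \<in> ?S" for x
      using subsetD[OF sub that] by (rule point_neq_0)
    show "0 \<notin> point ` ?S"
    proof
      assume "0 \<in> point ` ?S"
      then obtain x where "0 = point x" "x \<in> ?S" by (rule imageE)
      then show False using nz[OF \<open>x \<in> ?S\<close>] by simp
    qed
  qed
  also have "(\<Sum>x\<in>?S. \<beta> ^ point x) = (\<Sum>j\<in>{1..n}. \<Sum>y\<in>{1} \<times> K j \<union> {2} \<times> K' j. \<beta> ^ point (j, y))"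
    by (subst sum.Sigma) (use fin in auto)
  also have "\<dots> = (\<Sum>j\<in>{1..n}.
      (\<Sum>k\<in>K j. \<beta> ^ (p ^ (n - j) * g ^ k)) + (\<Sum>k\<in>K' j. (\<beta> ^ (p ^ (n - j) * g ^ k)) ^ 2))"
    using fin by (intro sum.cong refl) (simp add: sum_Times_singleton_Un power_\<beta>_point)
  finally show ?thesis
    by (simp only: sum.distrib sum_power_2 add.assoc)
qed

lemma poly_C1: "poly (ind_poly (C1 p e f g n b)) \<beta> = 1 + lower_sum \<beta> + lower_sum \<beta> ^ 2"
proof -
  have C1_split: "C1 p e f g n b = insert 0 (point `
      (SIGMA j:{1..n}. {1} \<times> class_exps j {..<d j div 2} \<union> {2} \<times> class_exps j {..<d j div 2}))"
    unfolding C1_eq by (rule arg_cong[where f = "\<lambda>S. insert 0 (point ` S)"]) auto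
  show ?thesis
    unfolding C1_split lower_sum_def period_def
    by (subst poly_ind_poly_points) (auto dest: class_exps_less_totient)
qed

lemma poly_C1t: "poly (ind_poly (C1t p e f g n b)) \<beta> = 1 + lower_sum \<beta> + upper_sum \<beta> ^ 2"
  unfolding C1t_eq lower_sum_def upper_sum_def period_def
  by (subst poly_ind_poly_points) (auto dest: class_exps_less_totient)

lemma period_lessThan_d:
  assumes j: "j \<in> {1..n}"
  shows "period \<beta> j {..<d j} = (if j + m = n + 1 then 1 else 0)"
proof -
  define \<omega> where "\<omega> = \<beta> ^ (p ^ (n - j))"
  have \<omega>_pow: "\<omega> ^ p ^ i = 1 \<longleftrightarrow> m \<le> n - j + i" for i
  proof -
    have "\<omega> ^ p ^ i = \<beta> ^ p ^ (n - j + i)" by (simp add: \<omega>_def power_add flip: power_mult)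
    then show ?thesis using p_gt_1 by (simp add: order_\<beta> dvd_power_iff_le)
  qed
  obtain i where i: "j = Suc i" using j by (cases j) auto
  have "period \<beta> j {..<d j} = (\<Sum>k<totient (p ^ j). \<omega> ^ (g ^ k mod p ^ j))"
  proof -
    have "[p ^ (n - j) * g ^ k = p ^ (n - j) * (g ^ k mod p ^ j)] (mod p ^ n)" for k
    proof -
      have "p ^ n = p ^ (n - j) * p ^ j" using j by (simp flip: power_add)
      then show ?thesis by (simp add: cong_def mod_mult_mult1)
    qed
    then have "\<beta> ^ (p ^ (n - j) * g ^ k) = \<omega> ^ (g ^ k mod p ^ j)" for k
      unfolding \<omega>_def power_mult[symmetric] by (rule power_\<beta>_cong)
    then show ?thesis using j by (simp add: period_def class_exps_lessThan_d)
  qed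
  also have "\<dots> = (\<Sum>y\<in>totatives (p ^ j). \<omega> ^ y)"
    using j p_gt_1
    by (intro sum.reindex_bij_betw residue_primroot_is_generator primroot_le one_less_power) auto
  also have "\<dots> = (if \<omega> = 1 then of_nat (p ^ j) else 0) - (if \<omega> ^ p = 1 then of_nat (p ^ i) else 0)"
    unfolding i by (rule sum_totatives_prime_power_root_of_unity[OF prime])
      (use \<omega>_pow[of j] i j m_le_n in simp)
  also have "\<dots> = (if j + m = n + 1 then 1 else 0)"
    using \<omega>_pow[of 0] \<omega>_pow[of 1] j odd_p two_eq_0 by (auto simp: of_nat_odd)
  finally show ?thesis .
qed

lemma lower_sum_plus_upper_sum: "lower_sum \<beta> + upper_sum \<beta> = 1"
proof -
  have "period \<beta> j {..<d j div 2} + period \<beta> j {d j div 2..<d j} = period \<beta> j {..<d j}" for j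
    unfolding period_def class_exps_halves(1)[symmetric]
    by (rule sum.union_disjoint[symmetric]) (simp_all add: class_exps_halves(2))
  then have "lower_sum \<beta> + upper_sum \<beta> = (\<Sum>j\<in>{1..n}. if j = n + 1 - m then 1 else 0)"
    unfolding lower_sum_def upper_sum_def sum.distrib[symmetric]
    using m_le_n by (intro sum.cong) (auto simp: period_lessThan_d)
  also have "\<dots> = 1" using m_ge_2 m_le_n by auto
  finally show ?thesis .
qed

section \<open>The twisting unit and the fibre over b\<close>

lemma n_ge_2: "n \<ge> 2"
  using m_ge_2 m_le_n by simp

lemma p_power_m: "p ^ m = p ^ (m - 1) * p" and p_power_m_1: "p ^ (m - 1) = p ^ (m - 2) * p"
proof -
  obtain m' where "m = Suc (Suc m')" using m_ge_2 by (metis add_2_eq_Suc le_Suc_ex)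
  then show "p ^ m = p ^ (m - 1) * p" "p ^ (m - 1) = p ^ (m - 2) * p" by (simp_all add: mult.commute)
qed

lemma not_dvd_e: "\<not> p dvd e"
proof -
  have "e \<le> e * f" using f_pos by simp
  then have "e < p" using p_eq by linarith
  then show ?thesis using e_pos by (auto dest: dvd_imp_le)
qed

definition e_inv :: nat where
  "e_inv = (SOME x. [e * x = 1] (mod p ^ n))"

lemma e_mult_e_inv: "[e * e_inv = 1] (mod p ^ n)"
proof -
  have "coprime e (p ^ n)"
    using prime_imp_coprime[OF prime not_dvd_e] by (simp add: coprime_commute)
  then have "\<exists>x. [e * x = 1] (mod p ^ n)" using cong_solve_coprime_nat by simp
  then show ?thesis unfolding e_inv_def by (rule someI_ex)
qed

lemma not_dvd_e_inv: "\<not> p dvd e_inv"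
proof
  assume "p dvd e_inv"
  moreover have "[e * e_inv = 1] (mod p)"
    using e_mult_e_inv by (rule cong_dvd_modulus_nat) (use n_pos in \<open>simp add: dvd_power\<close>)
  ultimately have "p dvd 1" using cong_dvd_iff by (metis dvd_mult)
  then show False using p_gt_1 by simp
qed

definition frob_unit :: nat where
  "frob_unit = g ^ ((p - 1) * e_inv)"

lemma frob_unit_cong_1: "[frob_unit = 1] (mod p)"
  using power_g_cong_iff[of 1 "(p - 1) * e_inv" 0] n_pos by (simp add: frob_unit_def cong_0_iff)

lemma not_dvd_frob_unit_power_mult_g_power: "\<not> p dvd frob_unit ^ s * g ^ k"
  using not_dvd_power_g[of "(p - 1) * e_inv * s + k"] by (simp add: frob_unit_def power_add power_mult)

lemma discrete_log_2: "\<exists>r. [g ^ r = 2] (mod p ^ n)"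
proof -
  have pn: "p ^ n > 1" using p_gt_1 n_pos by (intro one_less_power) auto
  have "2 \<in> totatives (p ^ n)"
    using odd_p p_ge_3 n_pos by (auto simp: totatives_def intro: le_trans[OF _ self_le_power])
  then have "2 \<in> (\<lambda>i. g ^ i mod p ^ n) ` {..<totient (p ^ n)}"
    using residue_primroot_is_generator[OF pn primroot] by (simp add: bij_betw_def)
  then obtain r where "g ^ r mod p ^ n = 2" by auto
  moreover have "2 < p ^ n" using p_ge_3 n_pos self_le_power[of p n] by auto
  ultimately have "[g ^ r = 2] (mod p ^ n)" by (simp add: cong_def)
  then show ?thesis ..
qed

lemma frob_unit_cong_power_2: "\<exists>v. [frob_unit = 2 ^ ((p - 1) * v)] (mod p ^ n)"
proof -
  obtain r where r: "[g ^ r = 2] (mod p ^ n)" using discrete_log_2 ..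
  have "\<not> p dvd r"
  proof
    assume "p dvd r"
    then have "[r * (p - 1) = 0] (mod p ^ (2 - 1) * (p - 1))"
      by (simp add: cong_0_iff mult_dvd_mono)
    then have one: "[g ^ (r * (p - 1)) = 1] (mod p ^ 2)"
      using power_g_cong_iff[of 2 "r * (p - 1)" 0] n_ge_2 by simp
    have "[g ^ (r * (p - 1)) = 2 ^ (p - 1)] (mod p ^ 2)"
      using cong_pow[OF r, of "p - 1"] n_ge_2
      by (simp add: power_mult cong_dvd_modulus_nat le_imp_power_dvd)
    then show False using cong_trans[OF cong_sym one] non_wieferich by blast
  qed
  then have "coprime r (p ^ (n - 1))" using prime by (simp add: prime_imp_coprime coprime_commute)
  from cong_solve_coprime_nat[OF this] obtain r' where r': "[r * r' = 1] (mod p ^ (n - 1))" by auto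
  define v where "v = r' * e_inv"
  have "[r * v = e_inv] (mod p ^ (n - 1))"
    using cong_mult[OF r' cong_refl[of e_inv]] by (simp add: v_def mult.assoc)
  then have "[(p - 1) * e_inv = r * ((p - 1) * v)] (mod p ^ (n - 1) * (p - 1))"
    unfolding cong_def by (simp add: mult.commute mult.left_commute mod_mult_mult2 cong_sym_eq)
  then have "[g ^ ((p - 1) * e_inv) = g ^ (r * ((p - 1) * v))] (mod p ^ n)"
    using power_g_cong_iff[of n "(p - 1) * e_inv" "r * ((p - 1) * v)"] n_pos by simp
  then have "[frob_unit = (g ^ r) ^ ((p - 1) * v)] (mod p ^ n)"
    by (simp add: frob_unit_def power_mult)
  also have "[(g ^ r) ^ ((p - 1) * v) = 2 ^ ((p - 1) * v)] (mod p ^ n)"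
    using r by (rule cong_pow)
  finally show ?thesis ..
qed

definition kappa :: nat where
  "kappa = frob_unit ^ p ^ (m - 2)"

definition kappa_coeff :: nat where
  "kappa_coeff = (kappa - 1) div p ^ (m - 1)"

lemma kappa_eq_g_power: "kappa = g ^ ((p - 1) * e_inv * p ^ (m - 2))"
  by (simp add: kappa_def frob_unit_def power_mult)

lemma kappa_eq: "kappa = 1 + kappa_coeff * p ^ (m - 1)"
proof -
  have "[kappa = 1] (mod p ^ (m - 1))"
    using power_g_cong_iff[of "m - 1" "(p - 1) * e_inv * p ^ (m - 2)" 0] m_ge_2 m_le_n
    by (simp add: kappa_eq_g_power cong_0_iff numeral_2_eq_2)
  moreover have "kappa \<ge> 1" using odd_g by (simp add: kappa_eq_g_power Suc_le_eq odd_pos)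
  ultimately have "p ^ (m - 1) dvd kappa - 1" by (simp add: cong_altdef_nat)
  then show ?thesis using \<open>kappa \<ge> 1\<close> by (simp add: kappa_coeff_def)
qed

lemma not_dvd_kappa_coeff: "\<not> p dvd kappa_coeff"
proof
  assume "p dvd kappa_coeff"
  then have "p ^ m dvd kappa_coeff * p ^ (m - 1)" by (simp add: p_power_m mult.commute mult_dvd_mono)
  then have "[kappa = 1 + 0] (mod p ^ m)"
    unfolding kappa_eq by (intro cong_add cong_refl) (simp add: cong_0_iff)
  then have cong_0: "[(p - 1) * e_inv * p ^ (m - 2) = 0] (mod p ^ (m - 1) * (p - 1))"
    using power_g_cong_iff[of m "(p - 1) * e_inv * p ^ (m - 2)" 0] m_ge_2 m_le_n
    by (simp add: kappa_eq_g_power)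
  define X where "X = (p - 1) * p ^ (m - 2)"
  have X: "p ^ (m - 1) * (p - 1) = X * p" "(p - 1) * e_inv * p ^ (m - 2) = X * e_inv"
    unfolding X_def p_power_m_1 by (simp_all add: mult_ac)
  have "X * p dvd X * e_inv" using cong_0[unfolded X] by (simp add: cong_0_iff)
  moreover have "X > 0" using p_gt_1 by (simp add: X_def)
  ultimately have "p dvd e_inv" by simp
  then show False using not_dvd_e_inv by simp
qed

lemma kappa_power_cong: "[kappa ^ t = 1 + t * kappa_coeff * p ^ (m - 1)] (mod p ^ m)"
proof (induction t)
  case (Suc t)
  have "[kappa ^ Suc t = (1 + t * kappa_coeff * p ^ (m - 1)) * kappa] (mod p ^ m)"
    using cong_mult[OF Suc cong_refl[of kappa]] by (simp add: mult.commute)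
  also have "(1 + t * kappa_coeff * p ^ (m - 1)) * kappa =
      (1 + Suc t * kappa_coeff * p ^ (m - 1)) + (t * kappa_coeff * kappa_coeff * p ^ (m - 2)) * p ^ m"
  proof -
    have "p ^ (m - 1) * p ^ (m - 1) = p ^ (m - 2) * p ^ m"
      unfolding p_power_m p_power_m_1 by (simp add: mult_ac)
    then show ?thesis by (simp add: kappa_eq algebra_simps)
  qed
  also have "[\<dots> = 1 + Suc t * kappa_coeff * p ^ (m - 1)] (mod p ^ m)"
    by (simp add: cong_def)
  finally show ?case .
qed simp

lemma kappa_power_mult_p_cong: "[kappa ^ t * p = p] (mod p ^ m)"
proof -
  have "[kappa = 1 + 0] (mod p ^ (m - 1))"
    unfolding kappa_eq by (intro cong_add cong_refl) (simp add: cong_0_iff)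
  then have "[kappa ^ t = 1 ^ t] (mod p ^ (m - 1))"
    by (intro cong_pow) simp
  then show ?thesis unfolding p_power_m cong_def by (simp add: mod_mult_mult2)
qed

definition fiber_size :: nat where
  "fiber_size = (p ^ (n - 1) + 1) div 2"

definition fiber :: "nat set" where
  "fiber = {k \<in> class_exps n {..<d n div 2}. [k = b] (mod p - 1)}"

definition fiber_exp :: "nat \<Rightarrow> nat" where
  "fiber_exp q = (b + (p - 1) * e_inv * q) mod totient (p ^ n)"

lemma two_fiber_size: "2 * fiber_size = p ^ (n - 1) + 1"
  using odd_p by (simp add: fiber_size_def)

lemma not_dvd_fiber_size: "\<not> p dvd fiber_size"
proof
  assume "p dvd fiber_size"
  then have "p dvd 2 * fiber_size" by simp
  then have "p dvd p ^ (n - 1) + 1" by (simp only: two_fiber_size)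
  moreover have "p dvd p ^ (n - 1)" using n_ge_2 by (simp add: dvd_power)
  ultimately have "p dvd (p ^ (n - 1) + 1) - p ^ (n - 1)" by (rule dvd_diff_nat)
  then show False using p_gt_1 by simp
qed

lemma f_mult_less_half_d_iff: "f * q < d n div 2 \<longleftrightarrow> q < fiber_size"
proof -
  obtain f' where f': "f = 2 * f'" using even_f by blast
  then have "f' > 0" using f_pos by simp
  have "f * q < d n div 2 \<longleftrightarrow> f' * (2 * q) < f' * p ^ (n - 1)"
    by (simp add: dd_def f' mult_ac)
  also have "\<dots> \<longleftrightarrow> 2 * q < p ^ (n - 1)" using \<open>f' > 0\<close> by simp
  also have "\<dots> \<longleftrightarrow> q < fiber_size"
  proof -
    have "odd (p ^ (n - 1))" using odd_p by simp
    then obtain k where k: "p ^ (n - 1) = 2 * k + 1" by (rule oddE)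
    show ?thesis unfolding fiber_size_def k by presburger
  qed
  finally show ?thesis .
qed

lemma totient_eq_d_mult_e: "totient (p ^ n) = d n * e"
  using d_mult_e n_pos by simp

lemma fiber_exp_less: "fiber_exp q < totient (p ^ n)"
  using totient_eq_d_mult_e d_pos e_pos by (simp add: fiber_exp_def)

lemma fiber_exp_cong_b: "[fiber_exp q = b] (mod p - 1)"
proof -
  have "(p - 1) dvd totient (p ^ n)" using n_pos by (simp add: totient_p_power)
  then show ?thesis by (simp add: fiber_exp_def cong_def mod_mod_cancel mult.assoc)
qed

lemma fiber_exp_mod_d: "fiber_exp q mod d n = (b + f * q) mod d n"
proof -
  have "[e * e_inv = 1] (mod p ^ (n - 1))"
    using e_mult_e_inv by (rule cong_dvd_modulus_nat) (simp add: le_imp_power_dvd)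
  then have "[f * q * (e * e_inv) = f * q * 1] (mod f * q * p ^ (n - 1))"
    unfolding cong_def by (metis mod_mult_mult1)
  then have "[(p - 1) * e_inv * q = f * q] (mod d n * q)"
    by (simp add: p_eq dd_def mult_ac)
  then have "[(p - 1) * e_inv * q = f * q] (mod d n)"
    by (rule cong_dvd_modulus_nat) simp
  then have "[b + (p - 1) * e_inv * q = b + f * q] (mod d n)"
    by (rule cong_add[OF cong_refl])
  moreover have "d n dvd totient (p ^ n)" by (simp add: totient_eq_d_mult_e)
  ultimately show ?thesis by (simp add: fiber_exp_def cong_def mod_mod_cancel)
qed

lemma class_exp_fiber_exp: "class_exp n (f * q) (fiber_exp q div d n) = fiber_exp q"
proof -
  have "class_exp n (f * q) (fiber_exp q div d n) = fiber_exp q mod d n + fiber_exp q div d n * d n"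
    by (simp add: class_exp_def fiber_exp_mod_d add.commute)
  then show ?thesis by (simp only: mod_div_mult_eq)
qed

lemma fiber_exp_inj_on: "inj_on fiber_exp {..<fiber_size}"
proof (rule inj_onI)
  fix q q' assume "q \<in> {..<fiber_size}" "q' \<in> {..<fiber_size}" and eq: "fiber_exp q = fiber_exp q'"
  then have "f * q < d n div 2" "f * q' < d n div 2" using f_mult_less_half_d_iff by auto
  then have less: "f * q < d n" "f * q' < d n" using div_le_dividend[of "d n" 2] by linarith+
  have "(b + f * q) mod d n = (b + f * q') mod d n" using eq by (metis fiber_exp_mod_d)
  then have "[f * q = f * q'] (mod d n)" by (simp add: cong_def[symmetric] cong_add_lcancel_nat)
  then show "q = q'" using cong_less_modulus_unique_nat[OF _ less] f_pos by simp
qed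

lemma fiber_exp_mem: "q < fiber_size \<Longrightarrow> fiber_exp q \<in> fiber"
proof -
  assume "q < fiber_size"
  moreover have "fiber_exp q div d n < e"
    using fiber_exp_less[of q] by (simp add: totient_eq_d_mult_e less_mult_imp_div_less mult.commute)
  ultimately have "(f * q, fiber_exp q div d n) \<in> {..<d n div 2} \<times> {..<e}"
    using f_mult_less_half_d_iff by simp
  then have "fiber_exp q \<in> class_exps n {..<d n div 2}"
    unfolding class_exps_def by (rule image_eqI[rotated]) (simp add: class_exp_fiber_exp)
  then show ?thesis using fiber_exp_cong_b by (simp add: fiber_def)
qed

lemma lcm_d_p_minus_1: "lcm (d n) (p - 1) = totient (p ^ n)"
proof -
  have pe: "p - 1 = e * f" using p_eq by simp
  have "coprime e (p ^ (n - 1))"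
    using prime_imp_coprime[OF prime not_dvd_e] by (simp add: coprime_commute)
  then have "lcm (p ^ (n - 1) * f) (e * f) = e * p ^ (n - 1) * f"
    by (simp add: lcm_mult_right lcm_coprime)
  then show ?thesis unfolding dd_def totient_p_power[OF n_pos] pe by (simp add: mult_ac)
qed

lemma fiber_subset_fiber_exp_image: "k \<in> fiber \<Longrightarrow> k \<in> fiber_exp ` {..<fiber_size}"
proof -
  assume "k \<in> fiber"
  then obtain i t where i: "i < d n div 2" and t: "t < e" and k: "k = class_exp n i t"
    and kb: "[k = b] (mod p - 1)"
    by (auto simp: fiber_def class_exps_def)
  have k_mod_d: "[k = i + b] (mod d n)" by (simp add: k class_exp_def cong_def)
  then have "[k = i + b] (mod f)" by (rule cong_dvd_modulus_nat) (simp add: dd_def)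
  moreover have "[k = b] (mod f)" using kb by (rule cong_dvd_modulus_nat) (simp add: p_eq)
  ultimately have "[i + b = 0 + b] (mod f)" using cong_trans[OF cong_sym] by simp
  then have "[i = 0] (mod f)" by (rule cong_add_rcancel_nat[THEN iffD1])
  then obtain q where q: "i = f * q" by (auto simp: cong_0_iff)
  have "[k = fiber_exp q] (mod d n)"
    using fiber_exp_mod_d[of q] k_mod_d q by (simp add: cong_def add.commute)
  moreover have "[k = fiber_exp q] (mod p - 1)"
    using cong_trans[OF kb cong_sym[OF fiber_exp_cong_b]] .
  ultimately have "[k = fiber_exp q] (mod totient (p ^ n))"
    by (simp flip: lcm_d_p_minus_1 add: cong_cong_lcm_nat)
  moreover have "k < totient (p ^ n)"
    using class_exps_less_totient[of k n "{..<d n div 2}"] \<open>k \<in> fiber\<close> n_pos by (auto simp: fiber_def)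
  ultimately have "k = fiber_exp q"
    using fiber_exp_less by (simp add: cong_less_modulus_unique_nat)
  moreover have "q < fiber_size" using i q f_mult_less_half_d_iff by simp
  ultimately show ?thesis by simp
qed

lemma fiber_exp_bij: "bij_betw fiber_exp {..<fiber_size} fiber"
  using fiber_exp_inj_on fiber_exp_mem fiber_subset_fiber_exp_image
  by (auto simp: bij_betw_def)

section \<open>Frobenius twists\<close>

lemma period_power: "period (\<gamma> ^ a) j I = (\<Sum>k\<in>class_exps j I. \<gamma> ^ (a * (p ^ (n - j) * g ^ k)))"
  by (simp add: period_def power_mult)

lemma lower_sum_power_2_power: "lower_sum (\<gamma> ^ 2 ^ w) = lower_sum \<gamma> ^ 2 ^ w"
  by (simp add: lower_sum_def period_def sum_power_power_2 mult.commute flip: power_mult)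

lemma lower_sum_frob_unit_power:
  assumes "lower_sum \<beta> ^ 4 = lower_sum \<beta>"
  shows "lower_sum (\<beta> ^ frob_unit ^ s) = lower_sum \<beta>"
proof -
  obtain v where v: "[frob_unit = 2 ^ ((p - 1) * v)] (mod p ^ n)" using frob_unit_cong_power_2 ..
  have "even (p - 1)" using odd_p by simp
  then obtain h where h: "p - 1 = 2 * h" ..
  have "[frob_unit ^ s = 2 ^ ((p - 1) * v * s)] (mod p ^ n)"
    using cong_pow[OF v, of s] by (simp only: power_mult)
  then have "\<beta> ^ frob_unit ^ s = \<beta> ^ 2 ^ (2 * (h * v * s))"
    unfolding h mult.assoc by (rule power_\<beta>_cong)
  then have "lower_sum (\<beta> ^ frob_unit ^ s) = lower_sum \<beta> ^ 2 ^ (2 * (h * v * s))"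
    by (simp only: lower_sum_power_2_power)
  also have "(2::nat) ^ (2 * (h * v * s)) = 4 ^ (h * v * s)"
    by (simp add: power_mult)
  finally show ?thesis using power_4_power_eq[OF assms] by simp
qed

lemma period_kappa_power:
  assumes "j < n"
  shows "period (\<beta> ^ (x * kappa ^ t)) j I = period (\<beta> ^ x) j I"
proof -
  obtain l where l: "n - j = Suc l" using assms by (metis Suc_diff_Suc)
  have cong: "[x * kappa ^ t * (p ^ (n - j) * y) = x * (p ^ (n - j) * y)] (mod p ^ m)" for y
    using cong_scalar_left[OF kappa_power_mult_p_cong, of "x * p ^ l * y" t]
    by (simp add: l mult_ac)
  show ?thesis
    unfolding period_power by (intro sum.cong refl power_\<beta>_eq_iff[THEN iffD2] cong)
qed

(* Orthogonality of the additive characters of Z/p: the t-th summand is beta ^ z * zeta ^ t for a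
   p-th root of unity zeta, which is trivial iff p divides y + z. *)
lemma sum_twisted_kappa_power:
  "(\<Sum>t<p. \<beta> ^ (y * kappa_coeff * p ^ (m - 1) * t) * \<beta> ^ (kappa ^ t * z)) =
     (if p dvd y + z then \<beta> ^ z else 0)"
proof -
  define \<zeta> where "\<zeta> = \<beta> ^ ((y + z) * kappa_coeff * p ^ (m - 1))"
  have "\<beta> ^ (y * kappa_coeff * p ^ (m - 1) * t) * \<beta> ^ (kappa ^ t * z) = \<beta> ^ z * \<zeta> ^ t" for t
  proof -
    have "[y * kappa_coeff * p ^ (m - 1) * t + kappa ^ t * z =
        y * kappa_coeff * p ^ (m - 1) * t + (1 + t * kappa_coeff * p ^ (m - 1)) * z] (mod p ^ m)"
      by (intro cong_add cong_refl cong_scalar_right kappa_power_cong)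
    also have "y * kappa_coeff * p ^ (m - 1) * t + (1 + t * kappa_coeff * p ^ (m - 1)) * z =
        z + (y + z) * kappa_coeff * p ^ (m - 1) * t"
      by (simp add: algebra_simps)
    finally have "\<beta> ^ (y * kappa_coeff * p ^ (m - 1) * t + kappa ^ t * z) =
        \<beta> ^ (z + (y + z) * kappa_coeff * p ^ (m - 1) * t)"
      by (simp only: power_\<beta>_eq_iff)
    then show ?thesis by (simp only: \<zeta>_def power_add power_mult)
  qed
  then have "(\<Sum>t<p. \<beta> ^ (y * kappa_coeff * p ^ (m - 1) * t) * \<beta> ^ (kappa ^ t * z)) =
      \<beta> ^ z * (\<Sum>t<p. \<zeta> ^ t)"
    by (simp add: sum_distrib_left)
  moreover have "\<zeta> ^ p = 1"
    by (simp add: \<zeta>_def order_\<beta> p_power_m flip: power_mult)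
  moreover have "\<zeta> = 1 \<longleftrightarrow> p dvd y + z"
  proof -
    have "\<zeta> = 1 \<longleftrightarrow> p ^ (m - 1) * p dvd p ^ (m - 1) * ((y + z) * kappa_coeff)"
      by (simp add: \<zeta>_def order_\<beta> p_power_m mult_ac)
    also have "\<dots> \<longleftrightarrow> p dvd (y + z) * kappa_coeff" using p_gt_1 by simp
    also have "\<dots> \<longleftrightarrow> p dvd y + z" using prime not_dvd_kappa_coeff by (simp add: prime_dvd_mult_iff)
    finally show ?thesis .
  qed
  ultimately show ?thesis using odd_p by (auto simp: of_nat_odd sum_gp_strict)
qed

lemma lower_sum_split:
  "lower_sum \<gamma> = (\<Sum>j\<in>{1..<n}. period \<gamma> j {..<d j div 2}) + period \<gamma> n {..<d n div 2}"
proof -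
  have "{1..n} = insert n {1..<n}" using n_pos by auto
  then show ?thesis by (simp add: lower_sum_def add.commute)
qed

(* The levels j < n are invariant under the twists by kappa (period_kappa_power), whereas the
   top level j = n averages to zero over them. *)
lemma top_period_frob_unit_power_eq_0:
  assumes A4: "lower_sum \<beta> ^ 4 = lower_sum \<beta>"
  shows "period (\<beta> ^ frob_unit ^ s) n {..<d n div 2} = 0"
proof -
  let ?L = "\<lambda>\<gamma>. \<Sum>j\<in>{1..<n}. period \<gamma> j {..<d j div 2}"
  let ?E = "\<lambda>\<gamma>. period \<gamma> n {..<d n div 2}"
  have frob_kappa: "frob_unit ^ s * kappa ^ t = frob_unit ^ (s + p ^ (m - 2) * t)" for t
    by (simp add: kappa_def power_add power_mult)
  have "(\<Sum>t<p. lower_sum (\<beta> ^ (frob_unit ^ s * kappa ^ t))) = lower_sum \<beta>"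
    using odd_p by (simp add: frob_kappa lower_sum_frob_unit_power[OF A4] of_nat_odd)
  moreover have "(\<Sum>t<p. ?L (\<beta> ^ (frob_unit ^ s * kappa ^ t))) = ?L (\<beta> ^ frob_unit ^ s)"
    using odd_p by (simp add: period_kappa_power of_nat_odd)
  moreover have "(\<Sum>t<p. ?E (\<beta> ^ (frob_unit ^ s * kappa ^ t))) = 0"
  proof -
    have "(\<Sum>t<p. ?E (\<beta> ^ (frob_unit ^ s * kappa ^ t))) =
        (\<Sum>k\<in>class_exps n {..<d n div 2}. \<Sum>t<p.
           \<beta> ^ (0 * kappa_coeff * p ^ (m - 1) * t) * \<beta> ^ (kappa ^ t * (frob_unit ^ s * g ^ k)))"
      by (simp add: period_power sum.swap[of _ "{..<p}"] mult_ac)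
    also have "\<dots> = 0"
      using not_dvd_frob_unit_power_mult_g_power by (simp only: sum_twisted_kappa_power) simp
    finally show ?thesis .
  qed
  ultimately have "lower_sum \<beta> = ?L (\<beta> ^ frob_unit ^ s)"
    by (simp add: lower_sum_split sum.distrib)
  then show ?thesis
    using lower_sum_frob_unit_power[OF A4, of s] lower_sum_split[of "\<beta> ^ frob_unit ^ s"] by simp
qed

lemma dvd_fiber_condition_iff:
  "p dvd (p - 1) * g ^ b + frob_unit ^ s * g ^ k \<longleftrightarrow> [k = b] (mod p - 1)"
proof -
  have "[frob_unit ^ s * g ^ k = 1 ^ s * g ^ k] (mod p)"
    by (intro cong_mult cong_pow frob_unit_cong_1 cong_refl)
  then have uk: "[(p - 1) * g ^ b + frob_unit ^ s * g ^ k = (p - 1) * g ^ b + g ^ k] (mod p)"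
    by (intro cong_add cong_refl) simp
  have "p dvd (p - 1) * g ^ b + frob_unit ^ s * g ^ k \<longleftrightarrow>
      [(p - 1) * g ^ b + frob_unit ^ s * g ^ k = 0] (mod p)"
    by (simp add: cong_0_iff)
  also have "\<dots> \<longleftrightarrow> [(p - 1) * g ^ b + g ^ k = 0] (mod p)"
    using cong_trans[OF cong_sym[OF uk]] cong_trans[OF uk] by blast
  also have "\<dots> \<longleftrightarrow> [(p - 1) * g ^ b + g ^ k = (p - 1) * g ^ b + g ^ b] (mod p)"
  proof -
    have "(p - 1) * g ^ b + g ^ b = p * g ^ b" using p_gt_1 by (simp add: algebra_simps)
    then have zero: "[(p - 1) * g ^ b + g ^ b = 0] (mod p)" by (simp add: cong_0_iff)
    show ?thesis using cong_trans[OF _ cong_sym[OF zero]] cong_trans[OF _ zero] by blast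
  qed
  also have "\<dots> \<longleftrightarrow> [g ^ k = g ^ b] (mod p)" by (rule cong_add_lcancel_nat)
  also have "\<dots> \<longleftrightarrow> [k = b] (mod p - 1)" using power_g_cong_iff[of 1] n_pos by simp
  finally show ?thesis .
qed

lemma fiber_sum_eq_0:
  assumes A4: "lower_sum \<beta> ^ 4 = lower_sum \<beta>"
  shows "(\<Sum>k\<in>fiber. \<beta> ^ (frob_unit ^ s * g ^ k)) = 0"
proof -
  let ?y = "(p - 1) * g ^ b"
  have "0 = (\<Sum>t<p. \<beta> ^ (?y * kappa_coeff * p ^ (m - 1) * t) *
      period (\<beta> ^ frob_unit ^ (s + p ^ (m - 2) * t)) n {..<d n div 2})"
    using top_period_frob_unit_power_eq_0[OF A4] by simp
  also have "\<dots> = (\<Sum>k\<in>class_exps n {..<d n div 2}. \<Sum>t<p.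
      \<beta> ^ (?y * kappa_coeff * p ^ (m - 1) * t) * \<beta> ^ (kappa ^ t * (frob_unit ^ s * g ^ k)))"
  proof -
    have exp: "frob_unit ^ (s + p ^ (m - 2) * t) * (p ^ (n - n) * g ^ k) =
        kappa ^ t * (frob_unit ^ s * g ^ k)" for t k
      by (simp add: kappa_def power_add mult_ac flip: power_mult)
    show ?thesis
      unfolding period_power sum_distrib_left exp by (rule sum.swap)
  qed
  also have "\<dots> = (\<Sum>k\<in>class_exps n {..<d n div 2}.
      if [k = b] (mod p - 1) then \<beta> ^ (frob_unit ^ s * g ^ k) else 0)"
    by (simp only: sum_twisted_kappa_power dvd_fiber_condition_iff)
  also have "\<dots> = (\<Sum>k\<in>fiber. \<beta> ^ (frob_unit ^ s * g ^ k))"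
    by (simp add: fiber_def sum.inter_filter)
  finally show ?thesis ..
qed

lemma fiber_sum_eq:
  "(\<Sum>k\<in>fiber. \<beta> ^ (x * g ^ k)) = (\<Sum>q<fiber_size. \<beta> ^ (x * (g ^ b * frob_unit ^ q)))"
proof -
  have "[g ^ fiber_exp q = g ^ b * frob_unit ^ q] (mod p ^ n)" for q
  proof -
    have "[fiber_exp q = b + (p - 1) * e_inv * q] (mod p ^ (n - 1) * (p - 1))"
      using n_pos by (simp add: fiber_exp_def totient_p_power cong_def)
    then have "[g ^ fiber_exp q = g ^ (b + (p - 1) * e_inv * q)] (mod p ^ n)"
      using power_g_cong_iff[of n "fiber_exp q" "b + (p - 1) * e_inv * q"] n_pos by simp
    moreover have "g ^ (b + (p - 1) * e_inv * q) = g ^ b * frob_unit ^ q"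
      by (simp add: frob_unit_def power_add power_mult)
    ultimately show ?thesis by simp
  qed
  then have "\<beta> ^ (x * g ^ fiber_exp q) = \<beta> ^ (x * (g ^ b * frob_unit ^ q))" for q
    by (intro power_\<beta>_cong cong_scalar_left)
  then show ?thesis by (simp add: sum.reindex_bij_betw[OF fiber_exp_bij, symmetric])
qed

lemma lower_sum_power_4_neq: "lower_sum \<beta> ^ 4 \<noteq> lower_sum \<beta>"
proof
  assume A4: "lower_sum \<beta> ^ 4 = lower_sum \<beta>"
  define X where "X q = \<beta> ^ (g ^ b * frob_unit ^ q)" for q
  have "(\<Sum>q<fiber_size. X q) = 0"
    using fiber_sum_eq_0[OF A4, of 0] fiber_sum_eq[of 1] by (simp add: X_def)
  moreover have "(\<Sum>q<fiber_size. X (Suc q)) = 0"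
    using fiber_sum_eq_0[OF A4, of 1] fiber_sum_eq[of frob_unit] by (simp add: X_def mult_ac)
  ultimately have "X fiber_size = X 0"
    using sum_lessThan_telescope[of X fiber_size] by (simp add: sum_subtractf)
  then have "[g ^ b * frob_unit ^ fiber_size = g ^ b * frob_unit ^ 0] (mod p ^ m)"
    by (simp add: X_def power_\<beta>_eq_iff)
  then have "[g ^ (b + (p - 1) * e_inv * fiber_size) = g ^ (b + 0)] (mod p ^ m)"
    by (simp add: frob_unit_def power_add power_mult)
  then have "[b + (p - 1) * e_inv * fiber_size = b + 0] (mod p ^ (m - 1) * (p - 1))"
    using power_g_cong_iff[of m "b + (p - 1) * e_inv * fiber_size" "b + 0"] m_ge_2 m_le_n by simp
  then have "[(p - 1) * e_inv * fiber_size = 0] (mod p ^ (m - 1) * (p - 1))"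
    by (simp only: cong_add_lcancel_nat)
  then have "(p - 1) * p ^ (m - 1) dvd (p - 1) * (e_inv * fiber_size)"
    by (simp add: cong_0_iff mult_ac)
  then have "p ^ (m - 1) dvd e_inv * fiber_size" using p_gt_1 by simp
  moreover have "p dvd p ^ (m - 1)" using m_ge_2 by (simp add: dvd_power)
  ultimately have "p dvd e_inv * fiber_size" by (metis dvd_trans)
  then show False using prime not_dvd_e_inv not_dvd_fiber_size by (simp add: prime_dvd_mult_iff)
qed

lemma poly_C1_neq_0: "poly (ind_poly (C1 p e f g n b)) \<beta> \<noteq> 0"
proof
  let ?A = "lower_sum \<beta>"
  assume "poly (ind_poly (C1 p e f g n b)) \<beta> = 0"
  then have "(1 + ?A) + ?A ^ 2 = 0" by (simp add: poly_C1)
  then have "- (1 + ?A) = ?A ^ 2" by (simp only: neg_eq_iff_add_eq_0)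
  then have A2: "?A ^ 2 = 1 + ?A" by (simp add: uminus_CHAR_2[OF char_2])
  have "?A ^ 4 = (?A ^ 2) ^ 2" by (simp flip: power_mult)
  also have "\<dots> = (1 + 1) + ?A" by (simp add: A2 add_power_2 add.assoc)
  finally show False using lower_sum_power_4_neq two_eq_0 by simp
qed

lemma poly_C1t_neq_0: "poly (ind_poly (C1t p e f g n b)) \<beta> \<noteq> 0"
proof
  let ?A = "lower_sum \<beta>"
  assume "poly (ind_poly (C1t p e f g n b)) \<beta> = 0"
  moreover have "upper_sum \<beta> = 1 + ?A"
    using lower_sum_plus_upper_sum by (metis add_diff_cancel_left' minus_CHAR_2[OF char_2] add.commute)
  ultimately have "?A + ?A ^ 2 = 0" using two_eq_0 by (simp add: poly_C1t add_power_2 ac_simps)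
  then have "- ?A = ?A ^ 2" by (simp only: neg_eq_iff_add_eq_0)
  then have A2: "?A ^ 2 = ?A" by (simp add: uminus_CHAR_2[OF char_2])
  have "?A ^ 4 = (?A ^ 2) ^ 2" by (simp flip: power_mult)
  then show False using lower_sum_power_4_neq by (simp add: A2)
qed

end

theorem proposition2:
  fixes p e f n g b :: nat and \<alpha> :: "'a::field"
  assumes "prime p" and "odd p" and "p = e * f + 1" and "e > 0" and "f > 0" and "even f"
    and "\<not> [2 ^ (p - 1) = 1] (mod p ^ 2)"
    and "n \<ge> 1"
    and "odd g" and "residue_primroot (p ^ n) g"
    and "b < p ^ (n - 1) * f"
    and "CHAR('a) = 2"
    and "primitive_root_of_unity (p ^ n) \<alpha>"
  shows "\<forall>i \<in> {0..<p ^ n} - {(p ^ (n - 1) * k) mod p ^ n | k. True}.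
           poly (ind_poly (C1 p e f g n b)) (\<alpha> ^ i) \<noteq> 0 \<and>
           poly (ind_poly (C1t p e f g n b)) (\<alpha> ^ i) \<noteq> 0"
proof
  fix i assume "i \<in> {0..<p ^ n} - {(p ^ (n - 1) * k) mod p ^ n | k. True}"
  then obtain m where "2 \<le> m" "m \<le> n" "\<And>x. (\<alpha> ^ i) ^ x = 1 \<longleftrightarrow> p ^ m dvd x"
    using power_primitive_root_prime_power_order[OF \<open>prime p\<close> \<open>primitive_root_of_unity (p ^ n) \<alpha>\<close>]
    by auto
  then interpret cyclotomic_root p e f g n b m "\<alpha> ^ i"
    using assms by unfold_locales auto
  show "poly (ind_poly (C1 p e f g n b)) (\<alpha> ^ i) \<noteq> 0 \<and>
      poly (ind_poly (C1t p e f g n b)) (\<alpha> ^ i) \<noteq> 0"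
    using poly_C1_neq_0 poly_C1t_neq_0 by simp
qed

end
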